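(* Let $k\ge 2$ be a fixed integer, and suppose the following supersaturation statement holds for this $k$: there are constants $C,c>0$ (depending only on $k$) such that every bipartite graph with parts $A,B$ and $m \geq C\bigl(|A|+|B|+(|A||B|)^{(k+1)/(2k)}\bigr)$ edges contains at least $c\, m^{2k}/(|A|^k|B|^k)$ cycles of length $2k$. Let $\mathbf{A}$ be the adjacency matrix of an undirected graph with maximum degree $\Delta$, $m$ edges, and $t$ cycles of length $2k$. Then $\|\mathbf{A}\|_\Phi = O\bigl(m^{1/(k+1)} + t^{1/(2k)}\log\Delta + \sqrt{\Delta}\bigr)$, where the implied constant depends only on $k$.
   Context: For a real vector $\mathbf{v}\in\mathbb{R}^n$, its $\Phi$-norm is $\|\mathbf{v}\|_\Phi = \int_0^\infty \sqrt{|\{ i : |v_i| \geq x\}|}\,dx$. For a real $n\times n$ matrix $\mathbf{A}$, $\|\mathbf{A}\|_\Phi = \sup_{\mathbf{v}\neq \mathbf{0}} \|\mathbf{A}\mathbf{v}\|_\Phi/\|\mathbf{v}\|_\Phi$ (the operator norm induced by the vector $\Phi$-norm). A cycle of length $2k$ means a subgraph isomorphic to the cycle $C_{2k}$ on $2k$ distinct vertices. *)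

theory Defs
  imports "HOL-Analysis.Analysis"
begin

text \<open>Cycles of length 2k in a graph given by a symmetric edge relation E:
  a subgraph isomorphic to C_{2k} is determined by its edge set, which is the
  set of unordered pairs {f i, f (i+1 mod 2k)} for an injective closed walk f.\<close>
definition cycles_2k :: "nat \<Rightarrow> ('a \<Rightarrow> 'a \<Rightarrow> bool) \<Rightarrow> 'a set set set" where
  "cycles_2k k E = {S. \<exists>f :: nat \<Rightarrow> 'a. inj_on f {..<2*k}
      \<and> (\<forall>i<2*k. E (f i) (f (Suc i mod (2*k))))
      \<and> S = {{f i, f (Suc i mod (2*k))} | i. i < 2*k}}"

definition num_cycles_2k :: "nat \<Rightarrow> ('a \<Rightarrow> 'a \<Rightarrow> bool) \<Rightarrow> nat" where
  "num_cycles_2k k E = card (cycles_2k k E)"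

definition bip_rel :: "('a \<times> 'a) set \<Rightarrow> 'a \<Rightarrow> 'a \<Rightarrow> bool" where
  "bip_rel F x y \<longleftrightarrow> (x, y) \<in> F \<or> (y, x) \<in> F"

definition supersaturation :: "nat \<Rightarrow> bool" where
  "supersaturation k \<longleftrightarrow> (\<exists>C c :: real. C > 0 \<and> c > 0 \<and>
     (\<forall>(A :: nat set) (B :: nat set) (F :: (nat \<times> nat) set).
        finite A \<longrightarrow> finite B \<longrightarrow> A \<inter> B = {} \<longrightarrow> F \<subseteq> A \<times> B \<longrightarrow>
        real (card F) \<ge> C * (real (card A) + real (card B)
                            + (real (card A) * real (card B)) powr (real (k+1) / real (2*k)))
        \<longrightarrow> real (num_cycles_2k k (bip_rel F))
              \<ge> c * real (card F) ^ (2*k) / (real (card A) ^ k * real (card B) ^ k)))"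

definition simple_graph :: "nat \<Rightarrow> (nat \<Rightarrow> nat \<Rightarrow> bool) \<Rightarrow> bool" where
  "simple_graph n E \<longleftrightarrow> (\<forall>i j. E i j \<longrightarrow> i < n \<and> j < n \<and> i \<noteq> j \<and> E j i)"

definition adj_matrix :: "(nat \<Rightarrow> nat \<Rightarrow> bool) \<Rightarrow> nat \<Rightarrow> nat \<Rightarrow> real" where
  "adj_matrix E i j = (if E i j then 1 else 0)"

definition num_edges :: "nat \<Rightarrow> (nat \<Rightarrow> nat \<Rightarrow> bool) \<Rightarrow> nat" where
  "num_edges n E = card {(i, j). i < j \<and> j < n \<and> E i j}"

definition degree :: "nat \<Rightarrow> (nat \<Rightarrow> nat \<Rightarrow> bool) \<Rightarrow> nat \<Rightarrow> nat" where
  "degree n E i = card {j. j < n \<and> E i j}"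

definition max_degree :: "nat \<Rightarrow> (nat \<Rightarrow> nat \<Rightarrow> bool) \<Rightarrow> nat" where
  "max_degree n E = Max (insert 0 (degree n E ` {..<n}))"

definition phi_norm :: "nat \<Rightarrow> (nat \<Rightarrow> real) \<Rightarrow> real" where
  "phi_norm n v = integral {0..} (\<lambda>x. sqrt (real (card {i. i < n \<and> \<bar>v i\<bar> \<ge> x})))"

definition mat_vec :: "nat \<Rightarrow> (nat \<Rightarrow> nat \<Rightarrow> real) \<Rightarrow> (nat \<Rightarrow> real) \<Rightarrow> nat \<Rightarrow> real" where
  "mat_vec n M v = (\<lambda>i. \<Sum>j<n. M i j * v j)"

text \<open>Induced operator norm; 0 is inserted only so that the case n = 0 is well-defined
  (all ratios are nonnegative, so this does not change the value for n \<ge> 1).\<close>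
definition phi_op_norm :: "nat \<Rightarrow> (nat \<Rightarrow> nat \<Rightarrow> real) \<Rightarrow> real" where
  "phi_op_norm n M = Sup (insert 0 {phi_norm n (mat_vec n M v) / phi_norm n v | v. \<exists>i<n. v i \<noteq> 0})"

end

theory Submission
  imports Defs "HOL-Analysis.Harmonic_Numbers"
begin

(*
  If r_i is the rank of |v_i| in decreasing order, the Phi-norm is the weighted sum
  sum_i (sqrt r_i - sqrt (r_i - 1)) |v_i|, and these weights are the largest any injective
  ranking can produce. Dualising, ||A||_Phi <= M as soon as sum_(h=1..Delta) sqrt N_h(S) <= M sqrt |S|
  for every vertex set S, where N_h(S) counts the vertices with at least h neighbours in S.

  These N_h(S) vertices send at least h N_h(S) edges into S, a quarter of which cross a suitable
  cut. Supersaturation applied to the resulting bipartite graph either produces many 2k-cycles,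
  giving sqrt N_h(S) <= O(t^(1/(2k)) sqrt |S| / h), or puts the edge count below the threshold,
  giving N_h(S) <= O(|S| / h), or h = O(1) and N_h(S) <= |S| Delta / h, or
  sqrt N_h(S) <= O(|S|^((k+1)/(2(k-1))) h^(-k/(k-1))), the last to be combined with N_h(S) <= 2m/h. Summing over h, the cycle term yields a harmonic
  sum and hence the factor log Delta, and the minimum of the last two bounds sums to
  O(sqrt |S| m^(1/(k+1))).
*)

definition sqrt_gap :: "nat \<Rightarrow> real" where
  "sqrt_gap j = sqrt (real j) - sqrt (real (j - 1))"

lemma sqrt_gap_eq_inverse:
  assumes "1 \<le> j"
  shows "sqrt_gap j = 1 / (sqrt (real j) + sqrt (real (j - 1)))"
proof -
  define a b where "a = sqrt (real j)" and "b = sqrt (real (j - 1))"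
  have "a * a = real j" "b * b = real j - 1"
    using assms by (simp_all add: a_def b_def)
  then have "(a - b) * (a + b) = 1"
    by (simp add: algebra_simps)
  moreover have "0 < a + b"
    using assms by (simp add: a_def b_def add_pos_nonneg)
  ultimately show ?thesis
    unfolding sqrt_gap_def a_def[symmetric] b_def[symmetric] by (simp add: field_simps)
qed

lemma sqrt_gap_pos: "1 \<le> j \<Longrightarrow> 0 < sqrt_gap j"
  by (simp add: sqrt_gap_eq_inverse add_pos_nonneg)

lemma sqrt_gap_nonneg: "0 \<le> sqrt_gap j"
  unfolding sqrt_gap_def by simp

lemma sqrt_gap_antimono:
  assumes "1 \<le> i" "i \<le> j"
  shows "sqrt_gap j \<le> sqrt_gap i"
proof -
  have "sqrt (real i) + sqrt (real (i - 1)) \<le> sqrt (real j) + sqrt (real (j - 1))"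
    using assms by (intro add_mono) auto
  moreover have "0 < sqrt (real i) + sqrt (real (i - 1))"
    using assms by (simp add: add_pos_nonneg)
  ultimately show ?thesis
    using assms by (simp add: sqrt_gap_eq_inverse frac_le)
qed

lemma sum_sqrt_gap_atLeastAtMost: "(\<Sum>j=1..t. sqrt_gap j) = sqrt (real t)"
  by (induction t) (simp_all add: sqrt_gap_def)

text \<open>Among all sets of t positive ranks, \<open>{1..t}\<close> carries the largest total weight.\<close>

lemma sum_sqrt_gap_le:
  assumes "finite R" "0 \<notin> R"
  shows "(\<Sum>r\<in>R. sqrt_gap r) \<le> sqrt (real (card R))"
  using assms
proof (induction "card R" arbitrary: R)
  case 0
  then show ?case by simp
next
  case (Suc t)
  define M where "M = Max R"
  have "R \<noteq> {}"
    using Suc.hyps(2) by auto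
  then have M: "M \<in> R"
    using Suc.prems by (simp add: M_def)
  have "R \<subseteq> {1..M}"
    using Suc.prems Max_ge[of R] by (auto simp: M_def Suc_le_eq intro: Nat.gr0I)
  then have "card R \<le> M"
    using card_mono[of "{1..M}" R] by simp
  then have gap_M: "sqrt_gap M \<le> sqrt_gap (card R)"
    using sqrt_gap_antimono[of "card R" M] Suc.hyps(2) by simp
  have "card (R - {M}) = t"
    using Suc.hyps(2) Suc.prems M by simp
  then have "(\<Sum>r\<in>R - {M}. sqrt_gap r) \<le> sqrt (real t)"
    using Suc.hyps(1)[of "R - {M}"] Suc.prems by simp
  moreover have "(\<Sum>r\<in>R. sqrt_gap r) = sqrt_gap M + (\<Sum>r\<in>R - {M}. sqrt_gap r)"
    using M Suc.prems by (simp add: sum.remove)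
  moreover have "sqrt_gap (card R) + sqrt (real t) = sqrt (real (card R))"
    using Suc.hyps(2)[symmetric] by (simp add: sqrt_gap_def)
  ultimately show ?case
    using gap_M by linarith
qed

lemma sum_sqrt_gap_inj_le:
  assumes "finite T" "inj_on \<rho> T" "\<forall>i\<in>T. 1 \<le> \<rho> i"
  shows "(\<Sum>i\<in>T. sqrt_gap (\<rho> i)) \<le> sqrt (real (card T))"
proof -
  have "(\<Sum>i\<in>T. sqrt_gap (\<rho> i)) = (\<Sum>r\<in>\<rho> ` T. sqrt_gap r)"
    using assms by (simp add: sum.reindex)
  also have "\<dots> \<le> sqrt (real (card (\<rho> ` T)))"
    using assms by (intro sum_sqrt_gap_le) force+
  finally show ?thesis
    using assms by (simp add: card_image)
qed

text \<open>Position of \<open>i\<close> when \<open>{..<n}\<close> is listed by decreasing \<open>a\<close>, ties broken by index.\<close>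

definition desc_rank :: "(nat \<Rightarrow> real) \<Rightarrow> nat \<Rightarrow> nat \<Rightarrow> nat" where
  "desc_rank a n i = card {j. j < n \<and> (a i < a j \<or> a j = a i \<and> j \<le> i)}"

lemma desc_rank_ge_1:
  assumes "i < n"
  shows "1 \<le> desc_rank a n i"
proof -
  have "i \<in> {j. j < n \<and> (a i < a j \<or> a j = a i \<and> j \<le> i)}"
    using assms by simp
  then have "{j. j < n \<and> (a i < a j \<or> a j = a i \<and> j \<le> i)} \<noteq> {}"
    by blast
  then show ?thesis
    unfolding desc_rank_def by (simp add: Suc_le_eq card_gt_0_iff)
qed

lemma desc_rank_less:
  assumes "i < n" "i' \<noteq> i" and before: "a i < a i' \<or> a i' = a i \<and> i' \<le> i"
  shows "desc_rank a n i' < desc_rank a n i"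
  unfolding desc_rank_def
proof (rule psubset_card_mono)
  let ?R = "\<lambda>i. {j. j < n \<and> (a i < a j \<or> a j = a i \<and> j \<le> i)}"
  have "?R i' \<subseteq> ?R i"
  proof
    fix j assume "j \<in> ?R i'"
    then show "j \<in> ?R i"
      using before by (cases "a i < a i'") auto
  qed
  moreover have "i \<in> ?R i" "i \<notin> ?R i'"
    using assms by auto
  ultimately show "?R i' \<subset> ?R i"
    by blast
qed simp

lemma desc_rank_inj: "inj_on (desc_rank a n) {..<n}"
proof (rule inj_onI)
  fix i i' assume "i \<in> {..<n}" "i' \<in> {..<n}" "desc_rank a n i = desc_rank a n i'"
  then show "i = i'"
    using desc_rank_less[of i n i' a] desc_rank_less[of i' n i a] by force
qed

lemma desc_rank_image_superlevel:
  "desc_rank a n ` {j. j < n \<and> x \<le> a j} = {1..card {j. j < n \<and> x \<le> a j}}"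
proof -
  let ?T = "{j. j < n \<and> x \<le> a j}"
  have "desc_rank a n i \<le> card ?T" if "i \<in> ?T" for i
    using that unfolding desc_rank_def by (intro card_mono) auto
  then have sub: "desc_rank a n ` ?T \<subseteq> {1..card ?T}"
    using desc_rank_ge_1 by auto
  have "inj_on (desc_rank a n) ?T"
    using desc_rank_inj by (rule inj_on_subset) auto
  then have "card (desc_rank a n ` ?T) = card {1..card ?T}"
    by (simp add: card_image)
  then show ?thesis
    using sub by (intro card_subset_eq) auto
qed

lemma sum_sqrt_gap_desc_rank_superlevel:
  "(\<Sum>i | i < n \<and> x \<le> a i. sqrt_gap (desc_rank a n i)) = sqrt (real (card {i. i < n \<and> x \<le> a i}))"
proof -
  have "inj_on (desc_rank a n) {i. i < n \<and> x \<le> a i}"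
    using desc_rank_inj by (rule inj_on_subset) auto
  then have "(\<Sum>i | i < n \<and> x \<le> a i. sqrt_gap (desc_rank a n i))
      = (\<Sum>r\<in>desc_rank a n ` {i. i < n \<and> x \<le> a i}. sqrt_gap r)"
    by (simp add: sum.reindex)
  then show ?thesis
    unfolding desc_rank_image_superlevel sum_sqrt_gap_atLeastAtMost .
qed

lemma sum_indicator_superlevel:
  fixes w a :: "nat \<Rightarrow> real"
  shows "(\<Sum>i<n. w i * (if x \<le> a i then 1 else 0)) = (\<Sum>i | i < n \<and> x \<le> a i. w i)"
proof -
  have "(\<Sum>i<n. w i * (if x \<le> a i then 1 else 0)) = (\<Sum>i<n. if x \<le> a i then w i else 0)"
    by (intro sum.cong) auto
  also have "\<dots> = (\<Sum>i\<in>{..<n} \<inter> {i. x \<le> a i}. w i)"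
    by (simp add: sum.inter_restrict)
  also have "{..<n} \<inter> {i. x \<le> a i} = {i. i < n \<and> x \<le> a i}"
    by auto
  finally show ?thesis .
qed

lemma has_integral_indicator_atMost:
  assumes "0 \<le> a"
  shows "((\<lambda>x::real. if x \<le> a then 1 else 0) has_integral a) {0..}"
proof -
  have "((\<lambda>x::real. 1::real) has_integral a) {0..a}"
    using has_integral_const_real[of "1::real" 0 a] assms by simp
  then have "((\<lambda>x::real. if x \<in> {0..a} then 1 else 0) has_integral a) {0..}"
    by (subst has_integral_restrict) auto
  then show ?thesis
    by (rule has_integral_cong[THEN iffD1, rotated]) auto
qed

lemma has_integral_layer_sum:
  fixes w a :: "nat \<Rightarrow> real"
  assumes "\<forall>i<n. 0 \<le> a i"
  shows "((\<lambda>x. \<Sum>i<n. w i * (if x \<le> a i then 1 else 0)) has_integral (\<Sum>i<n. w i * a i)) {0..}"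
  using assms by (intro has_integral_sum has_integral_mult_right) (auto intro: has_integral_indicator_atMost)

text \<open>Layer-cake formula: the integrand of the \<open>\<Phi>\<close>-norm is the sum of the rank weights over a
  superlevel set.\<close>

lemma has_integral_phi_norm:
  "((\<lambda>x. sqrt (real (card {i. i < n \<and> x \<le> \<bar>v i\<bar>}))) has_integral
     (\<Sum>i<n. sqrt_gap (desc_rank (\<lambda>j. \<bar>v j\<bar>) n i) * \<bar>v i\<bar>)) {0..}"
  using has_integral_layer_sum[of n "\<lambda>j. \<bar>v j\<bar>" "\<lambda>i. sqrt_gap (desc_rank (\<lambda>j. \<bar>v j\<bar>) n i)"]
  by (simp add: sum_indicator_superlevel sum_sqrt_gap_desc_rank_superlevel)

lemma phi_norm_eq_sum: "phi_norm n v = (\<Sum>i<n. sqrt_gap (desc_rank (\<lambda>j. \<bar>v j\<bar>) n i) * \<bar>v i\<bar>)"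
  unfolding phi_norm_def using has_integral_phi_norm by (rule integral_unique)

lemma phi_norm_pos:
  assumes "i < n" "v i \<noteq> 0"
  shows "0 < phi_norm n v"
proof -
  have "0 < sqrt_gap (desc_rank (\<lambda>j. \<bar>v j\<bar>) n i) * \<bar>v i\<bar>"
    using assms desc_rank_ge_1 sqrt_gap_pos by simp
  also have "\<dots> \<le> phi_norm n v"
    unfolding phi_norm_eq_sum using assms
    by (intro member_le_sum) (auto intro: mult_nonneg_nonneg sqrt_gap_nonneg)
  finally show ?thesis .
qed

lemma phi_norm_dual_le:
  assumes "\<And>y. 0 \<le> y \<Longrightarrow>
    (\<Sum>j | j < n \<and> y \<le> \<bar>v j\<bar>. g j) \<le> M * sqrt (real (card {j. j < n \<and> y \<le> \<bar>v j\<bar>}))"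
  shows "(\<Sum>j<n. g j * \<bar>v j\<bar>) \<le> M * phi_norm n v"
  unfolding phi_norm_eq_sum
proof (rule has_integral_le[OF has_integral_layer_sum has_integral_mult_right[OF has_integral_phi_norm]])
  fix y :: real
  assume "y \<in> {0..}"
  then show "(\<Sum>j<n. g j * (if y \<le> \<bar>v j\<bar> then 1 else 0))
      \<le> M * sqrt (real (card {j. j < n \<and> y \<le> \<bar>v j\<bar>}))"
    using assms by (simp add: sum_indicator_superlevel)
qed simp

lemma sum_adj_matrix:
  assumes "finite S"
  shows "(\<Sum>j\<in>S. adj_matrix E i j) = real (card {j\<in>S. E i j})"
  using assms by (simp add: adj_matrix_def sum.If_cases Int_def)

text \<open>Bound \<open>\<parallel>Av\<parallel>\<^sub>\<Phi>\<close> with the rank weights of \<open>Av\<close>, move them onto \<open>v\<close> by swapping the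
  sums, and dualise: the hypothesis is the dual inequality tested on superlevel sets of \<open>v\<close>.\<close>

lemma phi_norm_adj_mult_le:
  assumes bound: "\<And>S \<rho>. S \<subseteq> {..<n} \<Longrightarrow> inj_on \<rho> {..<n} \<Longrightarrow> \<forall>i<n. 1 \<le> \<rho> i \<Longrightarrow>
        (\<Sum>i<n. sqrt_gap (\<rho> i) * real (card {j\<in>S. E i j})) \<le> M * sqrt (real (card S))"
  shows "phi_norm n (mat_vec n (adj_matrix E) v) \<le> M * phi_norm n v"
proof -
  let ?A = "adj_matrix E"
  define \<rho> where "\<rho> = desc_rank (\<lambda>i. \<bar>mat_vec n ?A v i\<bar>) n"
  define g where "g j = (\<Sum>i<n. sqrt_gap (\<rho> i) * ?A i j)" for j
  have A_nonneg: "0 \<le> ?A i j" for i j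
    by (simp add: adj_matrix_def)
  have "\<bar>mat_vec n ?A v i\<bar> \<le> (\<Sum>j<n. ?A i j * \<bar>v j\<bar>)" for i
    unfolding mat_vec_def using sum_abs[of "\<lambda>j. ?A i j * v j" "{..<n}"] A_nonneg
    by (simp add: abs_mult)
  then have "phi_norm n (mat_vec n ?A v) \<le> (\<Sum>i<n. sqrt_gap (\<rho> i) * (\<Sum>j<n. ?A i j * \<bar>v j\<bar>))"
    unfolding phi_norm_eq_sum \<rho>_def by (intro sum_mono mult_left_mono sqrt_gap_nonneg)
  also have "\<dots> = (\<Sum>j<n. g j * \<bar>v j\<bar>)"
    unfolding g_def sum_distrib_left sum_distrib_right
    by (subst sum.swap) (simp add: mult.assoc)
  also have "\<dots> \<le> M * phi_norm n v"
  proof (rule phi_norm_dual_le)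
    fix y :: real
    let ?S = "{j. j < n \<and> y \<le> \<bar>v j\<bar>}"
    have "(\<Sum>j\<in>?S. g j) = (\<Sum>i<n. sqrt_gap (\<rho> i) * real (card {j\<in>?S. E i j}))"
      unfolding g_def by (subst sum.swap) (simp add: sum_distrib_left[symmetric] sum_adj_matrix)
    also have "\<dots> \<le> M * sqrt (real (card ?S))"
      using desc_rank_inj desc_rank_ge_1 unfolding \<rho>_def by (intro bound) auto
    finally show "(\<Sum>j\<in>?S. g j) \<le> M * sqrt (real (card ?S))" .
  qed
  finally show ?thesis .
qed

lemma phi_op_norm_adj_le:
  assumes "0 \<le> M"
    and "\<And>S \<rho>. S \<subseteq> {..<n} \<Longrightarrow> inj_on \<rho> {..<n} \<Longrightarrow> \<forall>i<n. 1 \<le> \<rho> i \<Longrightarrow>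
        (\<Sum>i<n. sqrt_gap (\<rho> i) * real (card {j\<in>S. E i j})) \<le> M * sqrt (real (card S))"
  shows "phi_op_norm n (adj_matrix E) \<le> M"
  unfolding phi_op_norm_def
proof (rule cSup_least)
  fix r assume "r \<in> insert 0 {phi_norm n (mat_vec n (adj_matrix E) v) / phi_norm n v | v. \<exists>i<n. v i \<noteq> 0}"
  then show "r \<le> M"
    using assms phi_norm_adj_mult_le[of n E M] phi_norm_pos by (auto simp: divide_le_eq)
qed simp

lemma sum_sqrt_gap_mult_le_layers:
  fixes d :: "nat \<Rightarrow> nat"
  assumes "\<forall>i<n. d i \<le> D" "inj_on \<rho> {..<n}" "\<forall>i<n. 1 \<le> \<rho> i"
  shows "(\<Sum>i<n. sqrt_gap (\<rho> i) * real (d i)) \<le> (\<Sum>h=1..D. sqrt (real (card {i. i < n \<and> h \<le> d i})))"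
proof -
  have layers: "real (d i) = (\<Sum>h=1..D. if h \<le> d i then 1 else 0)" if "i < n" for i
  proof -
    have "{1..D} \<inter> {h. h \<le> d i} = {1..d i}"
      using assms(1) that by auto
    then show ?thesis
      by (simp add: sum.If_cases)
  qed
  have "(\<Sum>i<n. sqrt_gap (\<rho> i) * real (d i))
      = (\<Sum>i<n. \<Sum>h=1..D. sqrt_gap (\<rho> i) * (if h \<le> d i then 1 else 0))"
    by (intro sum.cong refl) (simp add: layers sum_distrib_left)
  also have "\<dots> = (\<Sum>h=1..D. \<Sum>i<n. sqrt_gap (\<rho> i) * (if h \<le> d i then 1 else 0))"
    by (rule sum.swap)
  also have "\<dots> \<le> (\<Sum>h=1..D. sqrt (real (card {i. i < n \<and> h \<le> d i})))"
  proof (rule sum_mono)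
    fix h
    have "(\<Sum>i<n. sqrt_gap (\<rho> i) * (if h \<le> d i then 1 else 0)) = (\<Sum>i | i < n \<and> h \<le> d i. sqrt_gap (\<rho> i))"
      using sum_indicator_superlevel[of "\<lambda>i. sqrt_gap (\<rho> i)" "real h" "\<lambda>i. real (d i)" n] by simp
    also have "\<dots> \<le> sqrt (real (card {i. i < n \<and> h \<le> d i}))"
      using assms by (intro sum_sqrt_gap_inj_le) (auto intro: inj_on_subset)
    finally show "(\<Sum>i<n. sqrt_gap (\<rho> i) * (if h \<le> d i then 1 else 0))
        \<le> sqrt (real (card {i. i < n \<and> h \<le> d i}))" .
  qed
  finally show ?thesis .
qed

lemma degree_le_max_degree: "i < n \<Longrightarrow> degree n E i \<le> max_degree n E"
  unfolding max_degree_def by (intro Max_ge) auto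

lemma card_neighbours_le_max_degree:
  assumes "S \<subseteq> {..<n}" "i < n"
  shows "card {j\<in>S. E i j} \<le> max_degree n E"
proof -
  have "card {j\<in>S. E i j} \<le> degree n E i"
    unfolding degree_def using assms(1) by (intro card_mono) auto
  then show ?thesis
    using degree_le_max_degree[OF assms(2), of E] by linarith
qed

definition rich_vertices :: "nat \<Rightarrow> (nat \<Rightarrow> nat \<Rightarrow> bool) \<Rightarrow> nat set \<Rightarrow> nat \<Rightarrow> nat set" where
  "rich_vertices n E S h = {i. i < n \<and> h \<le> card {j\<in>S. E i j}}"

lemma phi_op_norm_adj_le_layers:
  assumes "0 \<le> M"
    and "\<And>S. S \<subseteq> {..<n} \<Longrightarrow>
      (\<Sum>h=1..max_degree n E. sqrt (real (card (rich_vertices n E S h)))) \<le> M * sqrt (real (card S))"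
  shows "phi_op_norm n (adj_matrix E) \<le> M"
proof (rule phi_op_norm_adj_le[OF assms(1)])
  fix S and \<rho> :: "nat \<Rightarrow> nat"
  assume S: "S \<subseteq> {..<n}" and \<rho>: "inj_on \<rho> {..<n}" "\<forall>i<n. 1 \<le> \<rho> i"
  have "(\<Sum>i<n. sqrt_gap (\<rho> i) * real (card {j\<in>S. E i j}))
      \<le> (\<Sum>h=1..max_degree n E. sqrt (real (card (rich_vertices n E S h))))"
    unfolding rich_vertices_def using S \<rho>
    by (intro sum_sqrt_gap_mult_le_layers) (auto intro: card_neighbours_le_max_degree)
  also have "\<dots> \<le> M * sqrt (real (card S))"
    using S by (rule assms(2))
  finally show "(\<Sum>i<n. sqrt_gap (\<rho> i) * real (card {j\<in>S. E i j})) \<le> M * sqrt (real (card S))" .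
qed

lemma card_directed_edges:
  assumes "simple_graph n E"
  shows "card {(i, j). i < n \<and> j < n \<and> E i j} = 2 * num_edges n E"
proof -
  let ?L = "{(i, j). i < j \<and> j < n \<and> E i j}"
  have fin: "finite ?L"
    by (rule finite_subset[of _ "{..<n} \<times> {..<n}"]) auto
  have "{(i, j). i < n \<and> j < n \<and> E i j} = ?L \<union> prod.swap ` ?L"
  proof (intro set_eqI iffI)
    fix p assume "p \<in> {(i, j). i < n \<and> j < n \<and> E i j}"
    then obtain i j where p: "p = (i, j)" "j < n" "E i j"
      by auto
    then have "i \<noteq> j" "E j i" "i < n"
      using assms unfolding simple_graph_def by auto
    then show "p \<in> ?L \<union> prod.swap ` ?L"
      using p by (cases "i < j") (auto simp: image_iff intro!: bexI[of _ "(j, i)"])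
  qed (use assms in \<open>auto simp: simple_graph_def\<close>)
  moreover have "?L \<inter> prod.swap ` ?L = {}"
    by auto
  ultimately show ?thesis
    unfolding num_edges_def using fin by (simp add: card_Un_disjoint card_image)
qed

lemma finite_cycles_2k:
  assumes "simple_graph n E"
  shows "finite (cycles_2k k E)"
proof (rule finite_subset)
  show "cycles_2k k E \<subseteq> Pow (Pow {..<n})"
    using assms unfolding cycles_2k_def simple_graph_def by blast
qed simp

lemma num_cycles_2k_mono:
  assumes "simple_graph n E" "\<And>x y. E' x y \<Longrightarrow> E x y"
  shows "num_cycles_2k k E' \<le> num_cycles_2k k E"
  unfolding num_cycles_2k_def cycles_2k_def
  by (intro card_mono finite_cycles_2k[OF assms(1), unfolded cycles_2k_def]) (use assms(2) in blast)

lemma max_degree_ge_2_if_cycle: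
  assumes "simple_graph n E" "2 \<le> k" "0 < num_cycles_2k k E"
  shows "2 \<le> max_degree n E"
proof -
  have "cycles_2k k E \<noteq> {}"
    using assms(3) unfolding num_cycles_2k_def by auto
  then obtain f where f: "inj_on f {..<2*k}" "\<forall>i<2*k. E (f i) (f (Suc i mod (2*k)))"
    unfolding cycles_2k_def by auto
  let ?l = "2 * k - 1"
  have "E (f 0) (f 1)" "E (f ?l) (f 0)"
    using f(2)[rule_format, of 0] f(2)[rule_format, of ?l] assms(2) by auto
  then have nbrs: "E (f 0) (f 1)" "E (f 0) (f ?l)" "f 0 < n"
    using assms(1) unfolding simple_graph_def by blast+
  have "{f 1, f ?l} \<subseteq> {j. j < n \<and> E (f 0) j}"
    using nbrs assms(1) unfolding simple_graph_def by blast
  then have "card {f 1, f ?l} \<le> card {j. j < n \<and> E (f 0) j}"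
    by (intro card_mono) auto
  moreover have "f 1 \<noteq> f ?l"
    using inj_onD[OF f(1), of 1 ?l] assms(2) by auto
  ultimately have "2 \<le> card {j. j < n \<and> E (f 0) j}"
    by simp
  then show ?thesis
    using degree_le_max_degree[OF nbrs(3), of E] unfolding degree_def by linarith
qed

lemma card_separating_subsets:
  assumes "finite W" "x \<in> W" "y \<in> W" "x \<noteq> y"
  shows "card {U\<in>Pow W. x \<in> U \<and> y \<notin> U} = 2 ^ (card W - 2)"
proof -
  have "{U\<in>Pow W. x \<in> U \<and> y \<notin> U} = insert x ` Pow (W - {x, y})"
  proof (intro set_eqI iffI)
    fix U assume "U \<in> {U\<in>Pow W. x \<in> U \<and> y \<notin> U}"
    then have "U = insert x (U - {x})" "U - {x} \<in> Pow (W - {x, y})"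
      by auto
    then show "U \<in> insert x ` Pow (W - {x, y})"
      by blast
  qed (use assms in auto)
  moreover have "inj_on (insert x) (Pow (W - {x, y}))"
  proof (rule inj_onI)
    fix A B assume "A \<in> Pow (W - {x, y})" "B \<in> Pow (W - {x, y})" "insert x A = insert x B"
    then show "A = B"
      by (metis Diff_insert_absorb PowD in_mono insertCI Diff_iff)
  qed
  ultimately have "card {U\<in>Pow W. x \<in> U \<and> y \<notin> U} = card (Pow (W - {x, y}))"
    by (simp add: card_image)
  also have "\<dots> = 2 ^ (card W - 2)"
    using assms by (simp add: card_Pow card_Diff_subset)
  finally show ?thesis .
qed

lemma sum_card_cuts:
  assumes W: "finite W" and PW: "P \<subseteq> W \<times> W" and irrefl: "\<forall>p\<in>P. fst p \<noteq> snd p"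
  shows "(\<Sum>U\<in>Pow W. card (P \<inter> (U \<times> (W - U)))) = card P * 2 ^ (card W - 2)"
proof -
  have finP: "finite P"
    using W PW finite_subset by blast
  have cut_eq: "card (P \<inter> (U \<times> (W - U))) = (\<Sum>p\<in>P. if fst p \<in> U \<and> snd p \<notin> U then 1 else 0)"
    if "U \<in> Pow W" for U
  proof -
    have "P \<inter> (U \<times> (W - U)) = {p\<in>P. fst p \<in> U \<and> snd p \<notin> U}"
      using PW by auto
    then show ?thesis
      using finP by (simp add: sum.If_cases Int_def)
  qed
  have "(\<Sum>U\<in>Pow W. card (P \<inter> (U \<times> (W - U))))
      = (\<Sum>U\<in>Pow W. \<Sum>p\<in>P. if fst p \<in> U \<and> snd p \<notin> U then 1 else 0)"
    using cut_eq by (rule sum.cong[OF refl])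
  also have "\<dots> = (\<Sum>p\<in>P. \<Sum>U\<in>Pow W. if fst p \<in> U \<and> snd p \<notin> U then 1 else 0)"
    by (rule sum.swap)
  also have "\<dots> = (\<Sum>p\<in>P. card {U\<in>Pow W. fst p \<in> U \<and> snd p \<notin> U})"
    using W by (intro sum.cong refl) (simp add: sum.If_cases Int_def)
  also have "\<dots> = (\<Sum>p\<in>P. 2 ^ (card W - 2))"
    using PW irrefl W by (intro sum.cong refl card_separating_subsets) auto
  finally show ?thesis
    by simp
qed

lemma exists_quarter_cut:
  assumes W: "finite W" and PW: "P \<subseteq> W \<times> W" and irrefl: "\<forall>p\<in>P. fst p \<noteq> snd p"
  shows "\<exists>U\<subseteq>W. card P \<le> 4 * card (P \<inter> (U \<times> (W - U)))"
proof (rule ccontr)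
  assume "\<not> ?thesis"
  then have less: "4 * card (P \<inter> (U \<times> (W - U))) < card P" if "U \<in> Pow W" for U
    using that by auto
  have "P \<noteq> {}"
    using less[of "{}"] by auto
  then obtain p0 where "p0 \<in> P"
    by blast
  then have "card {fst p0, snd p0} \<le> card W"
    using W PW by (intro card_mono) auto
  then have "2 \<le> card W"
    using irrefl \<open>p0 \<in> P\<close> by auto
  then have "(2::nat) ^ card W = 2 ^ (card W - 2) * 2 ^ 2"
    by (metis le_add_diff_inverse2 power_add)
  then have "(\<Sum>U\<in>Pow W. card P) = 4 * (\<Sum>U\<in>Pow W. card (P \<inter> (U \<times> (W - U))))"
    using sum_card_cuts[OF assms] W by (simp add: card_Pow)
  moreover have "4 * (\<Sum>U\<in>Pow W. card (P \<inter> (U \<times> (W - U)))) < (\<Sum>U\<in>Pow W. card P)"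
    unfolding sum_distrib_left using W less by (intro sum_strict_mono) auto
  ultimately show False
    by simp
qed

definition supersaturation_with :: "nat \<Rightarrow> real \<Rightarrow> real \<Rightarrow> bool" where
  "supersaturation_with k C c \<longleftrightarrow> (\<forall>(A :: nat set) (B :: nat set) (F :: (nat \<times> nat) set).
     finite A \<longrightarrow> finite B \<longrightarrow> A \<inter> B = {} \<longrightarrow> F \<subseteq> A \<times> B \<longrightarrow>
     real (card F) \<ge> C * (real (card A) + real (card B)
                         + (real (card A) * real (card B)) powr (real (k+1) / real (2*k)))
     \<longrightarrow> real (num_cycles_2k k (bip_rel F))
           \<ge> c * real (card F) ^ (2*k) / (real (card A) ^ k * real (card B) ^ k))"

lemma supersaturation_iff: "supersaturation k \<longleftrightarrow> (\<exists>C c. 0 < C \<and> 0 < c \<and> supersaturation_with k C c)"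
  unfolding supersaturation_def supersaturation_with_def by blast

text \<open>Supersaturation for a set \<open>P\<close> of edges between two possibly overlapping vertex sets:
  a quarter of \<open>P\<close> crosses a suitable cut and is then bipartite.\<close>

lemma supersaturation_dichotomy:
  fixes P :: "(nat \<times> nat) set"
  assumes ss: "supersaturation_with k C c" and "0 < C" "0 < c" "1 \<le> k"
    and G: "simple_graph n E" and T: "finite T" and S: "finite S"
    and P: "P \<subseteq> T \<times> S" "\<forall>(x, y)\<in>P. E x y"
  defines "\<alpha> \<equiv> real (k+1) / real (2*k)"
  shows "c * (real (card P) / 4) ^ (2*k) / (real (card T) ^ k * real (card S) ^ k)
           \<le> real (num_cycles_2k k E)
       \<or> real (card P) < 4 * C * (real (card T) + real (card S) + (real (card T) * real (card S)) powr \<alpha>)"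
proof (cases "P = {}")
  case True
  then show ?thesis
    using assms(4) by (simp add: power_0_left)
next
  case False
  have "\<forall>p\<in>P. fst p \<noteq> snd p"
    using P G unfolding simple_graph_def by auto
  then obtain U where cut: "card P \<le> 4 * card (P \<inter> (U \<times> (T \<union> S - U)))"
    using exists_quarter_cut[of "T \<union> S" P] T S P by auto
  define F where "F = P \<inter> (U \<times> (T \<union> S - U))"
  have F4: "real (card P) \<le> 4 * real (card F)"
    using cut unfolding F_def by linarith
  define A B where "A = T \<inter> U" and "B = S - U"
  have F: "F \<subseteq> A \<times> B" "A \<inter> B = {}"
    using P unfolding F_def A_def B_def by auto
  have AB: "finite A" "finite B" "card A \<le> card T" "card B \<le> card S"
    using T S unfolding A_def B_def by (auto intro: card_mono)
  show ?thesis
  proof (cases "C * (real (card A) + real (card B) + (real (card A) * real (card B)) powr \<alpha>) \<le> real (card F)")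
    case True
    have "F \<noteq> {}"
      using F4 False T S P by (auto simp: finite_subset)
    then have "0 < card A" "0 < card B"
      using F AB by (auto simp: card_gt_0_iff)
    then have "c * (real (card P) / 4) ^ (2*k) / (real (card T) ^ k * real (card S) ^ k)
        \<le> c * real (card F) ^ (2*k) / (real (card A) ^ k * real (card B) ^ k)"
      using F4 AB \<open>0 < c\<close> by (intro frac_le mult_left_mono mult_mono power_mono) auto
    also have "\<dots> \<le> real (num_cycles_2k k (bip_rel F))"
      using ss True F AB unfolding supersaturation_with_def \<alpha>_def by blast
    also have "\<dots> \<le> real (num_cycles_2k k E)"
      using P G unfolding F_def bip_rel_def simple_graph_def
      by (intro of_nat_mono num_cycles_2k_mono[OF G]) auto
    finally show ?thesis ..
  next
    case False
    have "(real (card A) * real (card B)) powr \<alpha> \<le> (real (card T) * real (card S)) powr \<alpha>"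
      unfolding \<alpha>_def using AB by (intro powr_mono2 mult_mono) auto
    then have "real (card F) < C * (real (card T) + real (card S) + (real (card T) * real (card S)) powr \<alpha>)"
      using False AB \<open>0 < C\<close> by (smt (verit) mult_left_mono of_nat_le_iff)
    then show ?thesis
      using F4 by linarith
  qed
qed

lemma card_Sigma_neighbours_le_max_degree:
  assumes "simple_graph n E" "finite T" "S \<subseteq> {..<n}"
  shows "card (Sigma T (\<lambda>i. {j\<in>S. E i j})) \<le> card S * max_degree n E"
proof -
  have "Sigma T (\<lambda>i. {j\<in>S. E i j}) = prod.swap ` Sigma S (\<lambda>j. {i\<in>T. E i j})"
    by auto
  then have "card (Sigma T (\<lambda>i. {j\<in>S. E i j})) = (\<Sum>j\<in>S. card {i\<in>T. E i j})"
    using assms finite_subset[OF assms(3)] by (simp add: card_image card_SigmaI)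
  also have "\<dots> \<le> (\<Sum>j\<in>S. degree n E j)"
    using assms(1) unfolding degree_def simple_graph_def by (intro sum_mono card_mono) auto
  also have "\<dots> \<le> (\<Sum>j\<in>S. max_degree n E)"
    using assms(3) by (intro sum_mono degree_le_max_degree) auto
  finally show ?thesis
    by simp
qed

lemma card_Sigma_neighbours_le_num_edges:
  assumes "simple_graph n E" "finite S"
  shows "card (Sigma T (\<lambda>i. {j\<in>S. E i j})) \<le> 2 * num_edges n E"
proof -
  have "Sigma T (\<lambda>i. {j\<in>S. E i j}) \<subseteq> {(i, j). i < n \<and> j < n \<and> E i j}"
    using assms(1) unfolding simple_graph_def by auto
  then have "card (Sigma T (\<lambda>i. {j\<in>S. E i j})) \<le> card {(i, j). i < n \<and> j < n \<and> E i j}"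
    by (intro card_mono) (auto intro: finite_subset[of _ "{..<n} \<times> {..<n}"])
  then show ?thesis
    using card_directed_edges[OF assms(1)] by simp
qed

lemma sqrt_le_of_cycle_bound:
  fixes x s h e t c :: real
  assumes k: "1 \<le> k" and c: "0 < c" and x: "0 < x" and s: "0 < s" and h: "0 < h"
    and he: "h * x \<le> e" and cyc: "c * (e/4) ^ (2*k) / (x ^ k * s ^ k) \<le> t"
  shows "sqrt x \<le> 4 * (t / c) powr (1 / real (2*k)) * sqrt s / h"
proof -
  define y where "y = h^2 * x / (16 * s)"
  have y: "0 < y"
    unfolding y_def using h x s by simp
  have "(h * x / 4) ^ (2*k) = y ^ k * (x ^ k * s ^ k)"
  proof -
    have "(h * x / 4)^2 = y * (x * s)"
      unfolding y_def using s by (simp add: power2_eq_square field_simps)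
    then show ?thesis
      by (simp add: power_mult power_mult_distrib)
  qed
  moreover have "(h * x / 4) ^ (2*k) \<le> (e / 4) ^ (2*k)"
    using he h x by (intro power_mono) auto
  ultimately have "c * (y ^ k * (x ^ k * s ^ k)) / (x ^ k * s ^ k) \<le> t"
    using cyc c x s by (smt (verit) divide_right_mono mult_left_mono zero_le_power mult_nonneg_nonneg)
  then have "y ^ k \<le> t / c"
    using c x s by (simp add: field_simps)
  then have "(y ^ k) powr (1 / real k) \<le> (t / c) powr (1 / real k)"
    using y by (intro powr_mono2) auto
  then have "y \<le> (t / c) powr (1 / real k)"
    using y k by (simp add: powr_realpow[symmetric] powr_powr)
  then have "sqrt y \<le> sqrt ((t / c) powr (1 / real k))"
    by simp
  also have "\<dots> = (t / c) powr (1 / real (2*k))"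
    by (simp add: powr_half_sqrt[symmetric] powr_powr mult.commute)
  finally have "sqrt y \<le> (t / c) powr (1 / real (2*k))" .
  moreover have "sqrt x = 4 * sqrt s * sqrt y / h"
    unfolding y_def using h s by (simp add: real_sqrt_mult real_sqrt_divide)
  ultimately show ?thesis
    using h s by (simp add: divide_right_mono mult_left_mono mult_ac)
qed

lemma sqrt_le_of_edge_threshold:
  fixes x s h C :: real
  assumes k: "2 \<le> k" and x: "0 < x" and s: "0 < s" and h: "0 < h" and C: "0 < C"
    and less: "h * x < 12 * C * (x * s) powr (real (k+1) / real (2*k))"
  defines "q \<equiv> real k / (real k - 1)"
  shows "sqrt x \<le> (12 * C) powr q * s powr ((real k + 1) / (2 * (real k - 1))) * h powr (- q)"
proof -
  define \<alpha> where "\<alpha> = real (k+1) / real (2*k)"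
  have k1: "0 < real k - 1"
    using k by simp
  have q: "0 < q" "(1 - \<alpha>) * q = 1/2" "\<alpha> * q = (real k + 1) / (2 * (real k - 1))"
    unfolding \<alpha>_def q_def using k1 k by (simp_all add: field_simps)
  define z where "z = x powr (1 - \<alpha>)"
  have z: "0 < z"
    unfolding z_def using x by simp
  have "x = x powr \<alpha> * z"
    unfolding z_def using x by (simp add: powr_add[symmetric])
  then have "h * z * x powr \<alpha> < 12 * C * s powr \<alpha> * x powr \<alpha>"
    using less unfolding \<alpha>_def[symmetric] by (simp add: powr_mult mult_ac)
  then have "z \<le> 12 * C * s powr \<alpha> / h"
    using x h by (simp add: field_simps)
  have "sqrt x = z powr q"
    unfolding z_def using x by (simp add: powr_powr q(2) powr_half_sqrt[symmetric])
  also have "\<dots> \<le> (12 * C * s powr \<alpha> / h) powr q"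
    using \<open>z \<le> 12 * C * s powr \<alpha> / h\<close> z q by (intro powr_mono2) auto
  also have "\<dots> = (12 * C) powr q * s powr (\<alpha> * q) * h powr (- q)"
    by (simp add: powr_divide powr_mult powr_powr powr_minus_divide)
  finally show ?thesis
    unfolding q(3) .
qed

lemma sqrt_layer_le:
  fixes x s h e t c C D m :: real
  assumes k: "2 \<le> k" and c: "0 < c" and C: "0 < C" and x: "0 < x" and s: "0 < s" and h: "0 < h"
    and t: "0 \<le> t" and he: "h * x \<le> e" and esD: "e \<le> s * D" and em: "e \<le> 2 * m"
    and alt: "c * (e/4) ^ (2*k) / (x ^ k * s ^ k) \<le> t
        \<or> e < 4 * C * (x + s + (x * s) powr (real (k+1) / real (2*k)))"
  defines "q \<equiv> real k / (real k - 1)"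
  shows "sqrt x \<le> sqrt (12 * C * s / h) + (if h \<le> 12 * C then sqrt (s * D / h) else 0)
      + min (sqrt (2 * m / h)) ((12 * C) powr q * s powr ((real k + 1) / (2 * (real k - 1))) * h powr (- q))
      + 4 * (t / c) powr (1 / real (2*k)) * sqrt s / h"
    (is "_ \<le> ?B1 + ?B2 + ?B3 + ?B4")
proof -
  have "0 \<le> s * D" "0 \<le> m"
    using he esD em x h by (smt (verit) mult_pos_pos)+
  then have nonneg: "0 \<le> ?B1" "0 \<le> ?B2" "0 \<le> ?B3" "0 \<le> ?B4"
    using C s h t c by (auto intro!: divide_nonneg_pos mult_nonneg_nonneg)
  consider "c * (e/4) ^ (2*k) / (x ^ k * s ^ k) \<le> t" | "h * x < 12 * C * s" | "h * x < 12 * C * x"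
    | "h * x < 12 * C * (x * s) powr (real (k+1) / real (2*k))"
    using alt he by (fastforce simp: algebra_simps)
  then show ?thesis
  proof cases
    case 1
    then have "sqrt x \<le> ?B4"
      using sqrt_le_of_cycle_bound[OF _ c x s h he] k by simp
    then show ?thesis
      using nonneg by linarith
  next
    case 2
    then have "sqrt x \<le> ?B1"
      using h by (simp add: field_simps)
    then show ?thesis
      using nonneg by linarith
  next
    case 3
    then have "h < 12 * C" "x \<le> s * D / h"
      using x h he esD by (simp_all add: field_simps)
    then have "sqrt x \<le> ?B2"
      by simp
    then show ?thesis
      using nonneg by linarith
  next
    case 4
    have "x \<le> 2 * m / h"
      using he em h by (simp add: field_simps)
    then have "sqrt x \<le> ?B3"
      using sqrt_le_of_edge_threshold[OF k x s h C 4] unfolding q_def by simp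
    then show ?thesis
      using nonneg by linarith
  qed
qed

lemma sum_inverse_sqrt_le: "(\<Sum>h=1..D. 1 / sqrt (real h)) \<le> 2 * sqrt (real D)"
proof (induction D)
  case 0
  then show ?case by simp
next
  case (Suc D)
  have "sqrt (real D) * sqrt (real (Suc D)) \<le> real D + 1/2"
  proof (rule power2_le_imp_le)
    show "(sqrt (real D) * sqrt (real (Suc D)))\<^sup>2 \<le> (real D + 1/2)\<^sup>2"
      by (simp add: power_mult_distrib power2_eq_square algebra_simps)
  qed simp
  then have "1 \<le> (2 * sqrt (real (Suc D)) - 2 * sqrt (real D)) * sqrt (real (Suc D))"
    by (simp add: algebra_simps)
  then have "1 / sqrt (real (Suc D)) \<le> 2 * sqrt (real (Suc D)) - 2 * sqrt (real D)"
    by (simp add: field_simps)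
  then show ?case
    using Suc by simp
qed

lemma sum_inverse_sqrt_upto_le:
  assumes "0 \<le> Y"
  shows "(\<Sum>h=1..D. if real h \<le> Y then 1 / sqrt (real h) else 0) \<le> 2 * sqrt Y"
proof -
  define J where "J = min D (nat \<lfloor>Y\<rfloor>)"
  have below_Y: "real h \<le> Y" if "h \<le> nat \<lfloor>Y\<rfloor>" for h
    using that of_nat_floor[OF assms] by (smt (verit) of_nat_le_iff)
  have "{1..D} \<inter> {h. real h \<le> Y} = {1..J}"
    unfolding J_def using assms below_Y by (auto simp: le_nat_floor)
  then have "(\<Sum>h=1..D. if real h \<le> Y then 1 / sqrt (real h) else 0) = (\<Sum>h=1..J. 1 / sqrt (real h))"
    using sum.inter_restrict[of "{1..D}" "\<lambda>h. 1 / sqrt (real h)" "{h. real h \<le> Y}"] by simp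
  also have "\<dots> \<le> 2 * sqrt (real J)"
    by (rule sum_inverse_sqrt_le)
  also have "real J \<le> Y"
    unfolding J_def by (rule below_Y) simp
  finally show ?thesis
    by simp
qed

lemma ln_of_nat_nonneg: "0 \<le> ln (real d)"
  by (cases "d = 0") auto

lemma harm_le_1_plus_ln: "harm D \<le> 1 + ln (real D)"
proof (cases "D = 0")
  case False
  then have "harm D - ln (real D) \<le> harm 1 - ln (real 1)"
    by (intro euler_mascheroni_sequence_decreasing) auto
  then show ?thesis
    by (simp add: harm_def)
qed (simp add: harm_def)

lemma powr_neg_le_diff:
  fixes q h :: real
  assumes q: "1 < q" and h: "2 \<le> h"
  shows "h powr (- q) \<le> ((h - 1) powr (1 - q) - h powr (1 - q)) / (q - 1)"
proof -
  have deriv: "\<And>x. h - 1 \<le> x \<Longrightarrow> x \<le> h \<Longrightarrow>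
      ((\<lambda>z. z powr (1 - q)) has_real_derivative (1 - q) * x powr ((1 - q) - 1)) (at x)"
    using h by (intro has_real_derivative_powr) auto
  obtain z where z: "h - 1 < z" "z < h"
    "h powr (1 - q) - (h - 1) powr (1 - q) = (h - (h - 1)) * ((1 - q) * z powr ((1 - q) - 1))"
    using MVT2[of "h - 1" h, OF _ deriv] by auto
  have "h powr (- q) \<le> z powr (- q)"
    using z h q by (intro powr_mono2') auto
  moreover have "(h - 1) powr (1 - q) - h powr (1 - q) = (q - 1) * z powr (- q)"
    using z(3) by (simp add: algebra_simps)
  ultimately show ?thesis
    using q by (simp add: le_divide_eq mult.commute)
qed

lemma sum_powr_neg_tail_le:
  fixes q :: real
  assumes q: "1 < q" and L: "1 \<le> L"
  shows "(\<Sum>h=L+1..D. real h powr (- q)) \<le> real L powr (1 - q) / (q - 1)"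
proof (cases "L \<le> D")
  case True
  then have "(\<Sum>h=L+1..D. real h powr (- q)) \<le> (real L powr (1 - q) - real D powr (1 - q)) / (q - 1)"
  proof (induction D rule: dec_induct)
    case (step D)
    have "real (Suc D) powr (- q) \<le> (real D powr (1 - q) - real (Suc D) powr (1 - q)) / (q - 1)"
      using powr_neg_le_diff[OF q, of "real (Suc D)"] L step(1) by simp
    then show ?case
      using step(1,3) by (simp add: diff_divide_distrib)
  qed simp
  also have "\<dots> \<le> real L powr (1 - q) / (q - 1)"
    using q by (simp add: divide_right_mono)
  finally show ?thesis .
qed (use q in simp)

lemma sum_powr_neg_le:
  fixes q :: real
  assumes "1 < q"
  shows "(\<Sum>h=1..D. real h powr (- q)) \<le> q / (q - 1)"
proof (cases "1 \<le> D")
  case True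
  then have "(\<Sum>h=1..D. real h powr (- q)) = 1 + (\<Sum>h=1+1..D. real h powr (- q))"
    by (simp add: sum.atLeast_Suc_atMost)
  also have "\<dots> \<le> 1 + 1 / (q - 1)"
    using sum_powr_neg_tail_le[OF assms, of 1 D] by simp
  finally show ?thesis
    using assms by (simp add: field_simps)
qed (use assms in simp)

lemma sum_powr_neg_above_floor_le:
  fixes q h0 :: real
  assumes q: "1 < q" and h0: "0 < h0"
  shows "(\<Sum>h=nat \<lfloor>h0\<rfloor>+1..D. real h powr (- q)) \<le> (2 powr (q - 1) + q) / (q - 1) * h0 powr (1 - q)"
proof (cases "1 \<le> h0")
  case True
  define L where "L = nat \<lfloor>h0\<rfloor>"
  have L: "1 \<le> L"
    unfolding L_def using True by (simp add: le_nat_floor)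
  moreover have "h0 < real L + 1"
    unfolding L_def using h0 real_of_int_floor_add_one_gt[of h0] by simp
  ultimately have L: "1 \<le> L" "h0 / 2 \<le> real L"
    by linarith+
  have "(\<Sum>h=L+1..D. real h powr (- q)) \<le> real L powr (1 - q) / (q - 1)"
    using sum_powr_neg_tail_le[OF q L(1)] .
  also have "\<dots> \<le> (h0 / 2) powr (1 - q) / (q - 1)"
    using L h0 q by (intro divide_right_mono powr_mono2') auto
  also have "(h0 / 2) powr (1 - q) = h0 powr (1 - q) * (1 / 2 powr (1 - q))"
    by (simp add: powr_divide)
  also have "1 / (2::real) powr (1 - q) = 2 powr (q - 1)"
    by (simp add: powr_minus_divide[symmetric])
  also have "h0 powr (1 - q) * 2 powr (q - 1) / (q - 1) = 2 powr (q - 1) / (q - 1) * h0 powr (1 - q)"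
    by simp
  also have "\<dots> \<le> (2 powr (q - 1) + q) / (q - 1) * h0 powr (1 - q)"
    using q by (intro mult_right_mono divide_right_mono) auto
  finally show ?thesis
    unfolding L_def .
next
  case False
  then have "nat \<lfloor>h0\<rfloor> = 0" "1 \<le> h0 powr (1 - q)"
    using h0 q powr_mono2'[of "1 - q" h0 1] by auto
  then have "(\<Sum>h=nat \<lfloor>h0\<rfloor>+1..D. real h powr (- q)) \<le> q / (q - 1)"
    using sum_powr_neg_le[OF q, of D] by simp
  also have "\<dots> \<le> q / (q - 1) * h0 powr (1 - q)"
    using mult_left_mono[OF \<open>1 \<le> h0 powr (1 - q)\<close>, of "q / (q - 1)"] q by simp
  also have "\<dots> \<le> (2 powr (q - 1) + q) / (q - 1) * h0 powr (1 - q)"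
    using q by (intro mult_right_mono divide_right_mono) auto
  finally show ?thesis .
qed

text \<open>Split the sum at the point \<open>h\<^sub>0\<close> where the two terms of the minimum are comparable.\<close>

lemma sum_min_inverse_sqrt_powr_le:
  fixes A B h0 q :: real
  assumes q: "1 < q" and A: "0 \<le> A" and B: "0 \<le> B" and h0: "0 < h0"
  shows "(\<Sum>h=1..D. min (A / sqrt (real h)) (B * real h powr (- q)))
           \<le> 2 * A * sqrt h0 + (2 powr (q - 1) + q) / (q - 1) * (B * h0 powr (1 - q))"
proof -
  define L where "L = nat \<lfloor>h0\<rfloor>"
  have tail: "(\<Sum>h=1..D. if h \<in> {L+1..D} then real h powr (- q) else 0) = (\<Sum>h=L+1..D. real h powr (- q))"
  proof -
    have "{1..D} \<inter> {L+1..D} = {L+1..D}"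
      by auto
    then show ?thesis
      using sum.inter_restrict[of "{1..D}" "\<lambda>h. real h powr (- q)" "{L+1..D}"] by simp
  qed
  have "(\<Sum>h=1..D. min (A / sqrt (real h)) (B * real h powr (- q)))
      \<le> (\<Sum>h=1..D. A * (if real h \<le> real L then 1 / sqrt (real h) else 0)
                   + B * (if h \<in> {L+1..D} then real h powr (- q) else 0))"
    by (intro sum_mono) auto
  also have "\<dots> = A * (\<Sum>h=1..D. if real h \<le> real L then 1 / sqrt (real h) else 0)
                  + B * (\<Sum>h=L+1..D. real h powr (- q))"
    unfolding tail[symmetric] by (simp only: sum.distrib sum_distrib_left)
  also have "\<dots> \<le> A * (2 * sqrt h0) + B * ((2 powr (q - 1) + q) / (q - 1) * h0 powr (1 - q))"
  proof (intro add_mono mult_left_mono)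
    show "(\<Sum>h=1..D. if real h \<le> real L then 1 / sqrt (real h) else 0) \<le> 2 * sqrt h0"
      using sum_inverse_sqrt_upto_le[of "real L" D] h0 by (simp add: L_def order_trans)
    show "(\<Sum>h=L+1..D. real h powr (- q)) \<le> (2 powr (q - 1) + q) / (q - 1) * h0 powr (1 - q)"
      unfolding L_def using q h0 by (rule sum_powr_neg_above_floor_le)
  qed (use A B in auto)
  finally show ?thesis
    by (simp add: mult_ac)
qed

text \<open>At \<open>h\<^sub>0\<close> both terms of the minimum in the layer bound are of order
  \<open>\<surd>s m\<^bsup>1/(k+1)\<^esup>\<close>, the size of the edge term of the theorem.\<close>

lemma layer_balance_point_sqrt:
  fixes s m :: real and k :: nat
  assumes "0 < m"
  defines "h0 \<equiv> s * m powr (2 / (real k + 1) - 1) / 2"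
  shows "sqrt (2 * m) * sqrt h0 = sqrt s * m powr (1 / (real k + 1))"
proof -
  have "m * m powr (2 / (real k + 1) - 1) = m powr 1 * m powr (2 / (real k + 1) - 1)"
    using assms by simp
  also have "\<dots> = m powr (1 + (2 / (real k + 1) - 1))"
    by (rule powr_add[symmetric])
  also have "1 + (2 / (real k + 1) - 1) = 2 / (real k + 1)"
    by simp
  also have "m powr (2 / (real k + 1)) = (m powr (1 / (real k + 1)))\<^sup>2"
    by (simp add: powr_powr power2_eq_square powr_add[symmetric])
  finally have "sqrt (2 * m) * sqrt h0 = sqrt (s * (m powr (1 / (real k + 1)))\<^sup>2)"
    unfolding h0_def by (simp add: real_sqrt_mult[symmetric] mult_ac)
  then show ?thesis
    by (simp add: real_sqrt_mult)
qed

lemma layer_balance_point_powr: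
  fixes s m C :: real
  assumes k: "2 \<le> k" and s: "0 < s"
  defines "q \<equiv> real k / (real k - 1)" and "h0 \<equiv> s * m powr (2 / (real k + 1) - 1) / 2"
  shows "(12 * C) powr q * s powr ((real k + 1) / (2 * (real k - 1))) * h0 powr (1 - q)
      = (12 * C) powr q * 2 powr (q - 1) * (sqrt s * m powr (1 / (real k + 1)))"
proof -
  have k1: "0 < real k - 1"
    using k by simp
  have "1 < real k * real k"
    using k1 by (metis less_1_mult diff_gt_0_iff_gt)
  then have e1: "(2 / (real k + 1) - 1) * (1 - q) = 1 / (real k + 1)"
    unfolding q_def using k1 by (simp add: field_simps)
  have "0 < (real k - 1) * (real k - 1)"
    using k1 by simp
  then have "real k * 4 < 2 + real k * (real k * 2)"
    by (simp add: algebra_simps)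
  then have e2: "(real k + 1) / (2 * (real k - 1)) + (1 - q) = 1/2"
    unfolding q_def using k1 by (simp add: field_simps)
  have "h0 powr (1 - q) = s powr (1 - q) * (m powr (2 / (real k + 1) - 1)) powr (1 - q) / 2 powr (1 - q)"
    unfolding h0_def by (simp add: powr_divide powr_mult)
  also have "(m powr (2 / (real k + 1) - 1)) powr (1 - q) = m powr (1 / (real k + 1))"
    by (simp add: powr_powr e1)
  also have "s powr (1 - q) * m powr (1 / (real k + 1)) / 2 powr (1 - q)
      = s powr (1 - q) * m powr (1 / (real k + 1)) * 2 powr (q - 1)"
  proof -
    have "1 / (2::real) powr (1 - q) = 2 powr (q - 1)"
      by (simp add: powr_minus_divide[symmetric])
    then show ?thesis
      by (metis times_divide_eq_right mult_1_right)
  qed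
  finally have "(12 * C) powr q * s powr ((real k + 1) / (2 * (real k - 1))) * h0 powr (1 - q)
      = (12 * C) powr q * 2 powr (q - 1)
        * (s powr ((real k + 1) / (2 * (real k - 1))) * s powr (1 - q)) * m powr (1 / (real k + 1))"
    by (simp add: mult_ac)
  also have "s powr ((real k + 1) / (2 * (real k - 1))) * s powr (1 - q) = sqrt s"
    using s unfolding powr_add[symmetric] e2 by (simp add: powr_half_sqrt)
  finally show ?thesis
    by (simp add: mult_ac)
qed

lemma sum_min_layer_le:
  fixes s m C :: real
  assumes k: "2 \<le> k" and "0 \<le> s" "0 \<le> m"
  defines "q \<equiv> real k / (real k - 1)"
  defines "a \<equiv> (12 * C) powr q * s powr ((real k + 1) / (2 * (real k - 1)))"
  shows "(\<Sum>h=1..D. min (sqrt (2 * m / real h)) (a * real h powr (- q)))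
     \<le> (2 + (2 powr (q - 1) + q) / (q - 1) * ((12 * C) powr q * 2 powr (q - 1)))
         * (sqrt s * m powr (1 / (real k + 1)))"
proof -
  have q1: "1 < q"
    unfolding q_def using k by (simp add: field_simps)
  show ?thesis
  proof (cases "s = 0 \<or> m = 0")
    case True
    then have "min (sqrt (2 * m / real h)) (a * real h powr (- q)) = 0" for h
      unfolding a_def using \<open>0 \<le> m\<close> by (auto simp: min_def divide_le_0_iff)
    then show ?thesis
      using q1 \<open>0 \<le> s\<close> by (simp add: add_nonneg_nonneg)
  next
    case False
    then have s: "0 < s" and m: "0 < m"
      using assms by auto
    define h0 where "h0 = s * m powr (2 / (real k + 1) - 1) / 2"
    have "0 < h0"
      unfolding h0_def using s m by simp
    have "(\<Sum>h=1..D. min (sqrt (2 * m / real h)) (a * real h powr (- q)))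
        = (\<Sum>h=1..D. min (sqrt (2 * m) / sqrt (real h)) (a * real h powr (- q)))"
      by (simp add: real_sqrt_divide)
    also have "\<dots> \<le> 2 * (sqrt (2 * m) * sqrt h0) + (2 powr (q - 1) + q) / (q - 1) * (a * h0 powr (1 - q))"
      using sum_min_inverse_sqrt_powr_le[OF q1, of "sqrt (2 * m)" a h0 D] m \<open>0 < h0\<close> by (simp add: a_def mult.assoc)
    also have "sqrt (2 * m) * sqrt h0 = sqrt s * m powr (1 / (real k + 1))"
      unfolding h0_def using m by (rule layer_balance_point_sqrt)
    also have "a * h0 powr (1 - q) = (12 * C) powr q * 2 powr (q - 1) * (sqrt s * m powr (1 / (real k + 1)))"
      unfolding a_def h0_def q_def using k s by (rule layer_balance_point_powr)
    finally show ?thesis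
      by (simp add: algebra_simps)
  qed
qed

lemma sqrt_card_rich_vertices_le:
  assumes k: "2 \<le> k" and ss: "supersaturation_with k C c" and C: "0 < C" and c: "0 < c"
    and G: "simple_graph n E" and S: "S \<subseteq> {..<n}" and h: "1 \<le> h"
  defines "s \<equiv> real (card S)" and "D \<equiv> real (max_degree n E)" and "m \<equiv> real (num_edges n E)"
    and "t \<equiv> real (num_cycles_2k k E)" and "q \<equiv> real k / (real k - 1)"
  shows "sqrt (real (card (rich_vertices n E S h)))
    \<le> sqrt (12 * C * s / real h) + (if real h \<le> 12 * C then sqrt (s * D / real h) else 0)
      + min (sqrt (2 * m / real h)) ((12 * C) powr q * s powr ((real k + 1) / (2 * (real k - 1))) * real h powr (- q))
      + 4 * (t / c) powr (1 / real (2*k)) * sqrt s / real h"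
proof (cases "rich_vertices n E S h = {}")
  case True
  then show ?thesis
    using C c unfolding s_def D_def m_def t_def by (auto intro!: add_nonneg_nonneg divide_nonneg_nonneg)
next
  case False
  define T where "T = rich_vertices n E S h"
  define P where "P = Sigma T (\<lambda>i. {j\<in>S. E i j})"
  have T: "finite T" "T \<noteq> {}"
    using False unfolding T_def rich_vertices_def by auto
  have finS: "finite S"
    using S finite_subset by blast
  then have "0 < card {j\<in>S. E i j}" if "i \<in> T" for i
    using that h unfolding T_def rich_vertices_def by auto
  then have "S \<noteq> {}"
    using T(2) by fastforce
  then have s: "0 < s"
    unfolding s_def using finS by (simp add: card_gt_0_iff)
  have "h * card T \<le> card P"
  proof -
    have "(\<Sum>i\<in>T. h) \<le> (\<Sum>i\<in>T. card {j\<in>S. E i j})"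
      by (intro sum_mono) (simp add: T_def rich_vertices_def)
    then show ?thesis
      unfolding P_def using T finS by (simp add: card_SigmaI mult.commute)
  qed
  then have he: "real h * real (card T) \<le> real (card P)"
    by (simp flip: of_nat_mult)
  have "card P \<le> card S * max_degree n E"
    unfolding P_def using G T(1) S by (rule card_Sigma_neighbours_le_max_degree)
  then have esD: "real (card P) \<le> s * D"
    unfolding s_def D_def by (simp flip: of_nat_mult)
  have "card P \<le> 2 * num_edges n E"
    unfolding P_def using G finS by (rule card_Sigma_neighbours_le_num_edges)
  then have em: "real (card P) \<le> 2 * m"
    unfolding m_def by simp
  have "P \<subseteq> T \<times> S" "\<forall>(x, y)\<in>P. E x y"
    unfolding P_def by auto
  then have alt: "c * (real (card P) / 4) ^ (2*k) / (real (card T) ^ k * s ^ k) \<le> t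
      \<or> real (card P) < 4 * C * (real (card T) + s + (real (card T) * s) powr (real (k+1) / real (2*k)))"
    unfolding s_def t_def using supersaturation_dichotomy[OF ss C c _ G T(1) finS] k by simp
  have "0 < real (card T)"
    using T by (simp add: card_gt_0_iff)
  then show ?thesis
    unfolding T_def[symmetric] q_def using k c C s h he esD em alt
    by (intro sqrt_layer_le) (simp_all add: t_def)
qed

lemma sum_degree_layers_le:
  fixes C s :: real
  assumes "0 \<le> C" "0 \<le> s"
  shows "(\<Sum>h=1..D. sqrt (12 * C * s / real h) + (if real h \<le> 12 * C then sqrt (s * real D / real h) else 0))
    \<le> 4 * sqrt (12 * C) * sqrt s * sqrt (real D)"
proof -
  have "(\<Sum>h=1..D. sqrt (12 * C * s / real h)) = sqrt (12 * C * s) * (\<Sum>h=1..D. 1 / sqrt (real h))"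
    by (simp add: sum_distrib_left real_sqrt_divide)
  also have "\<dots> \<le> sqrt (12 * C * s) * (2 * sqrt (real D))"
    using assms by (intro mult_left_mono sum_inverse_sqrt_le) simp
  finally have B1: "(\<Sum>h=1..D. sqrt (12 * C * s / real h)) \<le> 2 * sqrt (12 * C) * sqrt s * sqrt (real D)"
    by (simp add: real_sqrt_mult mult_ac)
  have "(\<Sum>h=1..D. if real h \<le> 12 * C then sqrt (s * real D / real h) else 0)
      = sqrt (s * real D) * (\<Sum>h=1..D. if real h \<le> 12 * C then 1 / sqrt (real h) else 0)"
    unfolding sum_distrib_left by (intro sum.cong refl) (simp add: real_sqrt_divide)
  also have "\<dots> \<le> sqrt (s * real D) * (2 * sqrt (12 * C))"
    using assms by (intro mult_left_mono sum_inverse_sqrt_upto_le) auto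
  finally have B2: "(\<Sum>h=1..D. if real h \<le> 12 * C then sqrt (s * real D / real h) else 0)
      \<le> 2 * sqrt (12 * C) * sqrt s * sqrt (real D)"
    by (simp add: real_sqrt_mult mult_ac)
  show ?thesis
    using B1 B2 by (simp add: sum.distrib)
qed

text \<open>The harmonic sum over the layers is where the factor \<open>log \<Delta>\<close> comes from.\<close>

lemma sum_cycle_layers_le:
  fixes s c :: real
  assumes G: "simple_graph n E" and k: "2 \<le> k" and "0 < c" "0 \<le> s"
  defines "t \<equiv> real (num_cycles_2k k E)" and "D \<equiv> max_degree n E"
  shows "(\<Sum>h=1..D. 4 * (t / c) powr (1 / real (2*k)) * sqrt s / real h)
    \<le> 12 * (1 / c) powr (1 / real (2*k)) * sqrt s * (t powr (1 / real (2*k)) * ln (real D))"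
proof (cases "t = 0")
  case False
  then have "2 \<le> D"
    unfolding t_def D_def using max_degree_ge_2_if_cycle[OF G k] by simp
  then have "ln 2 \<le> ln (real D)"
    by simp
  then have "1 + ln (real D) \<le> 3 * ln (real D)"
    using ln2_ge_two_thirds by linarith
  then have "harm D \<le> 3 * ln (real D)"
    using harm_le_1_plus_ln[of D] by linarith
  define X where "X = 4 * (t / c) powr (1 / real (2*k)) * sqrt s"
  have "(\<Sum>h=1..D. X / real h) = X * harm D"
    unfolding harm_def sum_distrib_left by (simp add: divide_inverse)
  also have "\<dots> \<le> X * (3 * ln (real D))"
    unfolding X_def using \<open>harm D \<le> 3 * ln (real D)\<close> \<open>0 \<le> s\<close> by (intro mult_left_mono) auto
  finally have "(\<Sum>h=1..D. X / real h) \<le> X * (3 * ln (real D))" .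
  moreover have "X * (3 * ln (real D))
      = 12 * (1 / c) powr (1 / real (2*k)) * sqrt s * (t powr (1 / real (2*k)) * ln (real D))"
    unfolding X_def using \<open>0 < c\<close> by (simp add: powr_divide)
  ultimately show ?thesis
    unfolding X_def by (rule ord_le_eq_trans)
qed simp

lemma sum_sqrt_card_rich_vertices_le:
  assumes k: "2 \<le> k" and ss: "supersaturation_with k C c" and C: "0 < C" and c: "0 < c"
    and G: "simple_graph n E" and S: "S \<subseteq> {..<n}"
  defines "q \<equiv> real k / (real k - 1)"
  defines "K \<equiv> 4 * sqrt (12 * C) + (2 + (2 powr (q - 1) + q) / (q - 1) * ((12 * C) powr q * 2 powr (q - 1)))
               + 12 * (1 / c) powr (1 / real (2*k))"
  shows "(\<Sum>h=1..max_degree n E. sqrt (real (card (rich_vertices n E S h))))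
    \<le> sqrt (real (card S)) * (K * (real (num_edges n E) powr (1 / (real k + 1))
         + real (num_cycles_2k k E) powr (1 / real (2*k)) * ln (real (max_degree n E))
         + sqrt (real (max_degree n E))))"
proof -
  define s D m t where "s = real (card S)" and "D = max_degree n E"
    and "m = real (num_edges n E)" and "t = real (num_cycles_2k k E)"
  define K1 K2 K3 where "K1 = 4 * sqrt (12 * C)"
    and "K2 = 2 + (2 powr (q - 1) + q) / (q - 1) * ((12 * C) powr q * 2 powr (q - 1))"
    and "K3 = 12 * (1 / c) powr (1 / real (2*k))"
  define Ed Em Ec where "Ed = sqrt (real D)" and "Em = m powr (1 / (real k + 1))"
    and "Ec = t powr (1 / real (2*k)) * ln (real D)"
  have "1 < q"
    unfolding q_def using k by (simp add: field_simps)
  then have nonneg: "0 \<le> K1" "0 \<le> K2" "0 \<le> K3" "0 \<le> Ed" "0 \<le> Em" "0 \<le> Ec" "0 \<le> s"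
    unfolding K1_def K2_def K3_def Ed_def Em_def Ec_def s_def m_def t_def using C
    by (auto intro!: add_nonneg_nonneg mult_nonneg_nonneg divide_nonneg_pos ln_of_nat_nonneg)
  have "(\<Sum>h=1..D. sqrt (real (card (rich_vertices n E S h))))
      \<le> (\<Sum>h=1..D. (sqrt (12 * C * s / real h) + (if real h \<le> 12 * C then sqrt (s * real D / real h) else 0))
          + min (sqrt (2 * m / real h)) ((12 * C) powr q * s powr ((real k + 1) / (2 * (real k - 1))) * real h powr (- q))
          + 4 * (t / c) powr (1 / real (2*k)) * sqrt s / real h)"
    unfolding s_def D_def m_def t_def q_def using assms by (intro sum_mono sqrt_card_rich_vertices_le) auto
  also have "\<dots> \<le> K1 * sqrt s * Ed + K2 * (sqrt s * Em) + K3 * sqrt s * Ec"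
  proof -
    have "(\<Sum>h=1..D. sqrt (12 * C * s / real h) + (if real h \<le> 12 * C then sqrt (s * real D / real h) else 0))
        \<le> K1 * sqrt s * Ed"
      unfolding K1_def Ed_def using C nonneg by (intro sum_degree_layers_le) auto
    moreover have "(\<Sum>h=1..D. min (sqrt (2 * m / real h))
          ((12 * C) powr q * s powr ((real k + 1) / (2 * (real k - 1))) * real h powr (- q)))
        \<le> K2 * (sqrt s * Em)"
      unfolding K2_def Em_def q_def using k nonneg by (intro sum_min_layer_le) (auto simp: m_def)
    moreover have "(\<Sum>h=1..D. 4 * (t / c) powr (1 / real (2*k)) * sqrt s / real h) \<le> K3 * sqrt s * Ec"
      unfolding K3_def Ec_def D_def t_def using G k c nonneg by (intro sum_cycle_layers_le) auto
    ultimately show ?thesis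
      by (simp add: sum.distrib)
  qed
  also have "\<dots> \<le> sqrt s * ((K1 + K2 + K3) * (Em + Ec + Ed))"
    using nonneg by (simp add: algebra_simps add_nonneg_nonneg mult_nonneg_nonneg)
  finally show ?thesis
    unfolding K_def K1_def K2_def K3_def Ed_def Em_def Ec_def s_def D_def m_def t_def .
qed

theorem mainTheorem2:
  fixes k :: nat
  assumes "k \<ge> 2" and "supersaturation k"
  shows "\<exists>K :: real. K > 0 \<and> (\<forall>(n :: nat) (E :: nat \<Rightarrow> nat \<Rightarrow> bool). simple_graph n E \<longrightarrow>
     phi_op_norm n (adj_matrix E) \<le>
       K * (real (num_edges n E) powr (1 / real (k + 1))
            + real (num_cycles_2k k E) powr (1 / real (2 * k)) * ln (real (max_degree n E))
            + sqrt (real (max_degree n E))))"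
proof -
  obtain C c where C: "0 < C" and c: "0 < c" and ss: "supersaturation_with k C c"
    using assms(2) supersaturation_iff by blast
  define q where "q = real k / (real k - 1)"
  define K where "K = 4 * sqrt (12 * C) + (2 + (2 powr (q - 1) + q) / (q - 1) * ((12 * C) powr q * 2 powr (q - 1)))
               + 12 * (1 / c) powr (1 / real (2*k))"
  have "1 < q"
    unfolding q_def using assms(1) by (simp add: field_simps)
  then have K: "0 < K"
    unfolding K_def using C by (intro add_pos_nonneg) auto
  show ?thesis
  proof (intro exI[of _ K] conjI allI impI K phi_op_norm_adj_le_layers)
    fix n E S
    assume G: "simple_graph n E" and S: "S \<subseteq> {..<n}"
    show "(\<Sum>h=1..max_degree n E. sqrt (real (card (rich_vertices n E S h))))
        \<le> K * (real (num_edges n E) powr (1 / real (k + 1))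
            + real (num_cycles_2k k E) powr (1 / real (2 * k)) * ln (real (max_degree n E))
            + sqrt (real (max_degree n E))) * sqrt (real (card S))"
      using sum_sqrt_card_rich_vertices_le[OF assms(1) ss C c G S]
      unfolding K_def q_def by (simp add: mult.commute add_ac)
  qed (use K in \<open>auto intro!: mult_nonneg_nonneg add_nonneg_nonneg ln_of_nat_nonneg\<close>)
qed

end
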